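(* Assume (A1)–(A4) and let $b\in\mathcal H$ be consistent. Then the optimization problem $$\min\{ f(Wx) : x\in\mathscr D(W),\ Ax=b\}$$ admits a unique solution $x^*\in\mathscr D(W)$, and it satisfies $Wx^*\in\mathscr D(f)$.
   Context: $\mathcal X,\mathcal Y,\mathcal H$ are real Hilbert spaces. Standing assumptions: (A1) $A:\mathcal X\to\mathcal H$ is a bounded linear operator. (A2) $f:\mathcal Y\to(-\infty,\infty]$ is proper, lower semicontinuous and strongly convex with constant $c_0>0$, i.e. $f(ty_1+(1-t)y_2)+c_0t(1-t)\|y_1-y_2\|^2\le tf(y_1)+(1-t)f(y_2)$ for all $y_1,y_2\in\mathcal Y$, $t\in[0,1]$. (A3) $W:\mathscr D(W)\subset\mathcal X\to\mathcal Y$ is a densely defined closed linear operator with domain $\mathscr D(W)$. (A4) There is $c_1>0$ with $\|Ax\|^2+\|Wx\|^2\ge c_1\|x\|^2$ for all $x\in\mathscr D(W)$. $\mathscr D(f)=\{y: f(y)<\infty\}$. The data $b\in\mathcal H$ is called consistent if $b=Ax$ for some $x\in\mathscr D(W)$ with $Wx\in\mathscr D(f)$. *)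

theory Defs
  imports "HOL-Analysis.Analysis"
begin

text \<open>Extended-real valued functions f : Y -> (-infinity, infinity] are modelled as
  functions into ereal that never take the value -infinity.\<close>

definition proper_fun :: "('a \<Rightarrow> ereal) \<Rightarrow> bool" where
  "proper_fun f \<longleftrightarrow> (\<forall>y. f y \<noteq> -\<infinity>) \<and> (\<exists>y. f y \<noteq> \<infinity>)"

definition lower_semicontinuous :: "('a::topological_space \<Rightarrow> ereal) \<Rightarrow> bool" where
  "lower_semicontinuous f \<longleftrightarrow> (\<forall>a::ereal. closed {y. f y \<le> a})"

definition effective_domain :: "('a \<Rightarrow> ereal) \<Rightarrow> 'a set" where
  "effective_domain f = {y. f y < \<infinity>}"

definition strongly_convex :: "real \<Rightarrow> ('a::real_normed_vector \<Rightarrow> ereal) \<Rightarrow> bool" where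
  "strongly_convex c f \<longleftrightarrow>
     (\<forall>y1 y2 t. 0 \<le> t \<and> t \<le> 1 \<longrightarrow>
        f (t *\<^sub>R y1 + (1 - t) *\<^sub>R y2) + ereal (c * t * (1 - t) * (norm (y1 - y2))\<^sup>2)
          \<le> ereal t * f y1 + ereal (1 - t) * f y2)"

definition linear_operator_on :: "'a::real_vector set \<Rightarrow> ('a \<Rightarrow> 'b::real_vector) \<Rightarrow> bool" where
  "linear_operator_on D W \<longleftrightarrow> subspace D \<and>
     (\<forall>x\<in>D. \<forall>y\<in>D. W (x + y) = W x + W y) \<and>
     (\<forall>x\<in>D. \<forall>c. W (c *\<^sub>R x) = c *\<^sub>R W x)"

definition densely_defined :: "'a::topological_space set \<Rightarrow> bool" where
  "densely_defined D \<longleftrightarrow> closure D = UNIV"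

definition closed_operator :: "'a::topological_space set \<Rightarrow> ('a \<Rightarrow> 'b::topological_space) \<Rightarrow> bool" where
  "closed_operator D W \<longleftrightarrow> closed {(x, W x) | x. x \<in> D}"

end

theory Submission
  imports Defs
begin

text \<open>
  Since \<open>W\<close> is unbounded, \<open>x \<mapsto> f (W x)\<close> need not be lower semicontinuous, so we
  minimise \<open>(x, y) \<mapsto> f y\<close> over the constrained graph \<open>G = {(x, W x) | x \<in> D, A x = b}\<close>
  instead. \<open>G\<close> is closed because \<open>W\<close> is closed and \<open>A\<close> is continuous, and it is convex.
  On \<open>G\<close> we have \<open>A (x - x') = 0\<close>, so (A4) bounds \<open>\<parallel>x - x'\<parallel>\<close> by \<open>\<parallel>W x - W x'\<parallel>\<close>; hence
  strong convexity of \<open>f\<close> makes the objective strongly convex in the graph norm.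
  A strongly convex, lower semicontinuous function that is bounded below (strong convexity plus
  lower semicontinuity force this) has Cauchy minimising sequences by the parallelogram-type
  midpoint estimate, so it attains its infimum on the closed convex set \<open>G\<close>, and the same
  estimate gives uniqueness.
\<close>

lemma strongly_convex_ge_outside_ball:
  fixes f :: "'a::real_normed_vector \<Rightarrow> ereal"
  assumes "strongly_convex c f" "c > 0" "d > 0" "f u = ereal w"
    and near: "\<And>z. dist u z < d \<Longrightarrow> ereal (w - 1) < f z"
    and far: "d \<le> norm (y - u)"
  shows "ereal (w - 1 - 2 / (c * d\<^sup>2)) \<le> f y"
proof -
  \<comment> \<open>apply strong convexity at the point z of the segment from u to y at distance d/2 from u\<close>
  define r where "r = norm (y - u)"
  define t where "t = d / (2 * r)"
  have "r > 0"
    using \<open>d > 0\<close> far unfolding r_def by linarith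
  then have "0 < t" "t \<le> 1/2"
    using \<open>d > 0\<close> far by (simp_all add: r_def t_def field_simps)
  define z where "z = t *\<^sub>R y + (1 - t) *\<^sub>R u"
  have "z - u = t *\<^sub>R (y - u)"
    by (simp add: z_def algebra_simps)
  then have "dist u z = t * r"
    using \<open>t > 0\<close> by (simp add: dist_norm norm_minus_commute[of u z] r_def)
  also have "\<dots> = d / 2"
    using \<open>r > 0\<close> by (simp add: t_def)
  finally have "dist u z = d / 2" .
  then have fz: "ereal (w - 1) < f z"
    using near \<open>d > 0\<close> by simp
  have sc: "f z + ereal (c * t * (1 - t) * r\<^sup>2) \<le> ereal t * f y + ereal (1 - t) * f u"
    using assms(1) \<open>0 < t\<close> \<open>t \<le> 1/2\<close> unfolding strongly_convex_def z_def r_def by simp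
  show ?thesis
  proof (cases "f y")
    case (real v)
    have "w - 1 + c * t * (1 - t) * r\<^sup>2 < t * v + (1 - t) * w"
      using fz sc real \<open>f u = ereal w\<close> by (cases "f z") auto
    then have "c * (1 - t) * r\<^sup>2 - 1 / t < v - w"
      using \<open>t > 0\<close> by (simp add: field_simps)
    moreover have "c * r\<^sup>2 / 2 \<le> c * (1 - t) * r\<^sup>2"
    proof -
      have "c * r\<^sup>2 * (1/2) \<le> c * r\<^sup>2 * (1 - t)"
        using \<open>t \<le> 1/2\<close> \<open>c > 0\<close> by (intro mult_left_mono) auto
      then show ?thesis by (simp add: algebra_simps)
    qed
    moreover have "1 / t = 2 * r / d"
      by (simp add: t_def)
    \<comment> \<open>the quadratic c r^2/2 - 2r/d in r is minimal at r = 2/(c d)\<close>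
    moreover have "- 2 / (c * d\<^sup>2) \<le> c * r\<^sup>2 / 2 - 2 * r / d"
    proof -
      have "0 \<le> c / 2 * (r - 2 / (c * d))\<^sup>2"
        using \<open>c > 0\<close> by simp
      also have "\<dots> = c * r\<^sup>2 / 2 - 2 * r / d + 2 / (c * d\<^sup>2)"
        using \<open>c > 0\<close> \<open>d > 0\<close> by (simp add: power2_eq_square field_simps)
      finally show ?thesis by simp
    qed
    ultimately have "w - 1 - 2 / (c * d\<^sup>2) \<le> v"
      by argo
    then show ?thesis
      using real by simp
  next
    case MInf
    then show ?thesis
      using fz sc \<open>t > 0\<close> \<open>f u = ereal w\<close> by (cases "f z") auto
  qed simp
qed

lemma strongly_convex_bdd_below:
  fixes f :: "'a::real_normed_vector \<Rightarrow> ereal"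
  assumes "proper_fun f" "lower_semicontinuous f" "c > 0" "strongly_convex c f"
  shows "\<exists>L. \<forall>y. ereal L \<le> f y"
proof -
  obtain u w where u: "f u = ereal w"
    using assms(1) unfolding proper_fun_def by (metis ereal_cases)
  have "open (- {y. f y \<le> ereal (w - 1)})"
    using assms(2) unfolding lower_semicontinuous_def by blast
  moreover have "u \<in> - {y. f y \<le> ereal (w - 1)}"
    using u by simp
  ultimately obtain d where "d > 0" "ball u d \<subseteq> - {y. f y \<le> ereal (w - 1)}"
    using open_contains_ball by blast
  then have near: "\<And>z. dist u z < d \<Longrightarrow> ereal (w - 1) < f z"
    by (auto simp: subset_eq not_le)
  have "ereal (w - 1 - 2 / (c * d\<^sup>2)) \<le> f y" for y
  proof (cases "d \<le> norm (y - u)")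
    case True
    then show ?thesis
      using strongly_convex_ge_outside_ball[OF assms(4,3) \<open>d > 0\<close> u near] by blast
  next
    case False
    then have "ereal (w - 1) < f y"
      using near by (simp add: dist_norm norm_minus_commute)
    moreover have "ereal (w - 1 - 2 / (c * d\<^sup>2)) \<le> ereal (w - 1)"
      using \<open>c > 0\<close> by simp
    ultimately show ?thesis
      by (meson less_imp_le order_trans)
  qed
  then show ?thesis by blast
qed

lemma lower_semicontinuous_compose:
  assumes "lower_semicontinuous f" "continuous_on UNIV g"
  shows "lower_semicontinuous (\<lambda>x. f (g x))"
  unfolding lower_semicontinuous_def
proof
  fix a
  have "{x. f (g x) \<le> a} = g -` {y. f y \<le> a}" by auto
  then show "closed {x. f (g x) \<le> a}"
    using assms closed_vimage unfolding lower_semicontinuous_def by metis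
qed

lemma lower_semicontinuous_le_limit:
  fixes \<phi> :: "'a::metric_space \<Rightarrow> ereal"
  assumes "lower_semicontinuous \<phi>" "X \<longlonglongrightarrow> l"
    and bound: "\<And>n. \<phi> (X n) \<le> ereal (m + e n)" and "e \<longlonglongrightarrow> 0"
  shows "\<phi> l \<le> ereal m"
proof (rule ccontr)
  assume "\<not> \<phi> l \<le> ereal m"
  then have "ereal m < \<phi> l"
    by simp
  then obtain z where "m < z" "ereal z < \<phi> l"
    using ereal_dense2 by force
  have "\<forall>\<^sub>F n in sequentially. e n < z - m"
    using \<open>e \<longlonglongrightarrow> 0\<close> \<open>m < z\<close> by (intro order_tendstoD(2)) auto
  then have "\<forall>\<^sub>F n in sequentially. X n \<in> {y. \<phi> y \<le> ereal z}"
  proof (rule eventually_mono)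
    fix n assume "e n < z - m"
    then have "ereal (m + e n) \<le> ereal z"
      by simp
    then show "X n \<in> {y. \<phi> y \<le> ereal z}"
      using bound[of n] order_trans by blast
  qed
  moreover have "closed {y. \<phi> y \<le> ereal z}"
    using assms(1) unfolding lower_semicontinuous_def by blast
  ultimately have "l \<in> {y. \<phi> y \<le> ereal z}"
    using Lim_in_closed_set \<open>X \<longlonglongrightarrow> l\<close> trivial_limit_sequentially by blast
  then show False
    using \<open>ereal z < \<phi> l\<close> by simp
qed

lemma Cauchy_of_sq_norm_diff_le:
  fixes X :: "nat \<Rightarrow> 'a::real_normed_vector"
  assumes bound: "\<And>m n. (norm (X m - X n))\<^sup>2 \<le> e m + e n" and "e \<longlonglongrightarrow> 0"
  shows "Cauchy X"
proof (rule metric_CauchyI)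
  fix \<epsilon> :: real assume "\<epsilon> > 0"
  then have "\<epsilon>\<^sup>2 / 2 > 0"
    by simp
  then obtain M where "\<forall>n\<ge>M. norm (e n - 0) < \<epsilon>\<^sup>2 / 2"
    using LIMSEQ_D[OF \<open>e \<longlonglongrightarrow> 0\<close>] by blast
  then have M: "e n < \<epsilon>\<^sup>2 / 2" if "n \<ge> M" for n
    using that by auto
  have "dist (X m) (X n) < \<epsilon>" if "m \<ge> M" "n \<ge> M" for m n
  proof -
    have "(norm (X m - X n))\<^sup>2 < \<epsilon>\<^sup>2"
      using bound[of m n] M[OF that(1)] M[OF that(2)] by linarith
    then show ?thesis
      using \<open>\<epsilon> > 0\<close> by (simp add: dist_norm power2_less_imp_less)
  qed
  then show "\<exists>M. \<forall>m\<ge>M. \<forall>n\<ge>M. dist (X m) (X n) < \<epsilon>"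
    by blast
qed

definition midpoint_strongly_convex_on :: "'a set \<Rightarrow> real \<Rightarrow> ('a::real_normed_vector \<Rightarrow> ereal) \<Rightarrow> bool" where
  "midpoint_strongly_convex_on C c \<phi> \<longleftrightarrow>
     (\<forall>u\<in>C. \<forall>v\<in>C. \<forall>a a'. \<phi> u = ereal a \<longrightarrow> \<phi> v = ereal a' \<longrightarrow>
        \<phi> (midpoint u v) \<le> ereal ((a + a') / 2 - c / 4 * (norm (u - v))\<^sup>2))"

lemma strongly_convex_imp_midpoint_strongly_convex_on:
  assumes "strongly_convex c f"
  shows "midpoint_strongly_convex_on C c f"
  unfolding midpoint_strongly_convex_on_def
proof (intro ballI allI impI)
  fix u v a a' assume fu: "f u = ereal a" and fv: "f v = ereal a'"
  have "f ((1/2) *\<^sub>R u + (1 - 1/2) *\<^sub>R v) + ereal (c * (1/2) * (1 - 1/2) * (norm (u - v))\<^sup>2)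
          \<le> ereal (1/2) * f u + ereal (1 - 1/2) * f v"
    using assms[unfolded strongly_convex_def, rule_format, of "1/2" u v] by simp
  then have "f (midpoint u v) + ereal (c / 4 * (norm (u - v))\<^sup>2) \<le> ereal ((a + a') / 2)"
    by (simp add: midpoint_def fu fv scaleR_add_right field_simps)
  then show "f (midpoint u v) \<le> ereal ((a + a') / 2 - c / 4 * (norm (u - v))\<^sup>2)"
    by (cases "f (midpoint u v)") (simp_all add: field_simps)
qed

lemma midpoint_strongly_convex_on_sq_dist_le:
  assumes "midpoint_strongly_convex_on C c \<phi>" "convex C"
    and "u \<in> C" "v \<in> C" "\<phi> u = ereal a" "\<phi> v = ereal a'"
    and lower: "\<And>w. w \<in> C \<Longrightarrow> ereal m \<le> \<phi> w"
  shows "c / 4 * (norm (u - v))\<^sup>2 \<le> (a + a') / 2 - m"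
proof -
  have "midpoint u v \<in> C"
    using convexD[OF assms(2-4), of "1/2" "1/2"] by (simp add: midpoint_def scaleR_add_right)
  then have "ereal m \<le> ereal ((a + a') / 2 - c / 4 * (norm (u - v))\<^sup>2)"
    using lower assms(1,3-6) unfolding midpoint_strongly_convex_on_def by (meson order_trans)
  then show ?thesis by (simp add: field_simps)
qed

lemma midpoint_strongly_convex_lsc_has_minimizer:
  fixes \<phi> :: "'a::{real_normed_vector,complete_space} \<Rightarrow> ereal"
  assumes "convex C" "closed C" "lower_semicontinuous \<phi>" "c > 0"
    and msc: "midpoint_strongly_convex_on C c \<phi>"
    and lower: "\<And>u. u \<in> C \<Longrightarrow> ereal L \<le> \<phi> u"
    and "z \<in> C" "\<phi> z < \<infinity>"
  shows "\<exists>u\<in>C. \<forall>v\<in>C. \<phi> u \<le> \<phi> v"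
proof -
  have "ereal L \<le> (INF u\<in>C. \<phi> u)" "(INF u\<in>C. \<phi> u) \<le> \<phi> z"
    using lower \<open>z \<in> C\<close> by (auto intro: INF_greatest INF_lower)
  then obtain m where m: "(INF u\<in>C. \<phi> u) = ereal m"
    using \<open>\<phi> z < \<infinity>\<close> by (cases "INF u\<in>C. \<phi> u") auto
  have m_le: "ereal m \<le> \<phi> u" if "u \<in> C" for u
    using that m by (metis INF_lower)
  define e where "e = (\<lambda>n. inverse (real (Suc n)))"
  have "e \<longlonglongrightarrow> 0"
    unfolding e_def by (rule LIMSEQ_inverse_real_of_nat)
  have "e n > 0" for n
    by (simp add: e_def)
  have "\<exists>u\<in>C. \<phi> u < ereal (m + e n)" for n
    using \<open>e n > 0\<close> m by (simp add: INF_less_iff[symmetric])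
  then obtain X where X: "\<And>n. X n \<in> C" "\<And>n. \<phi> (X n) < ereal (m + e n)"
    by metis
  define a where "a n = real_of_ereal (\<phi> (X n))" for n
  have \<phi>X: "\<phi> (X n) = ereal (a n)" and a_less: "a n < m + e n" for n
    using m_le[OF X(1), of n] X(2)[of n] unfolding a_def by (cases "\<phi> (X n)"; simp)+
  have "(norm (X i - X j))\<^sup>2 \<le> 2 / c * e i + 2 / c * e j" for i j
  proof -
    have "c / 4 * (norm (X i - X j))\<^sup>2 \<le> (a i + a j) / 2 - m"
      using midpoint_strongly_convex_on_sq_dist_le[OF msc \<open>convex C\<close> X(1) X(1) \<phi>X \<phi>X m_le] .
    then show ?thesis
      using a_less[of i] a_less[of j] \<open>c > 0\<close> by (simp add: field_simps)
  qed
  moreover have "(\<lambda>n. 2 / c * e n) \<longlonglongrightarrow> 0"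
    using \<open>e \<longlonglongrightarrow> 0\<close> by (rule tendsto_mult_right_zero)
  ultimately have "Cauchy X"
    by (rule Cauchy_of_sq_norm_diff_le)
  then obtain l where "X \<longlonglongrightarrow> l"
    using convergent_eq_Cauchy by blast
  then have "l \<in> C"
    using \<open>closed C\<close> X(1) closed_sequentially by blast
  moreover have "\<phi> l \<le> ereal m"
    using lower_semicontinuous_le_limit[OF \<open>lower_semicontinuous \<phi>\<close> \<open>X \<longlonglongrightarrow> l\<close> _ \<open>e \<longlonglongrightarrow> 0\<close>] X(2)
    by (meson less_imp_le)
  ultimately show ?thesis
    using m_le order_trans by blast
qed

lemma midpoint_strongly_convex_minimizer_unique:
  assumes "convex C" "c > 0" "midpoint_strongly_convex_on C c \<phi>"
    and "u \<in> C" "\<forall>w\<in>C. \<phi> u \<le> \<phi> w" "v \<in> C" "\<forall>w\<in>C. \<phi> v \<le> \<phi> w"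
    and "\<phi> u = ereal a"
  shows "u = v"
proof -
  have "\<phi> v = ereal a"
    using assms(4-8) by (metis antisym)
  then have "c / 4 * (norm (u - v))\<^sup>2 \<le> (a + a) / 2 - a"
    using assms by (intro midpoint_strongly_convex_on_sq_dist_le[of C c \<phi>]) auto
  then show ?thesis
    using \<open>c > 0\<close> by (simp add: mult_le_0_iff)
qed

lemma midpoint_strongly_convex_lsc_ex1_minimizer:
  fixes \<phi> :: "'a::{real_normed_vector,complete_space} \<Rightarrow> ereal"
  assumes "convex C" "closed C" "lower_semicontinuous \<phi>" "c > 0"
    and "midpoint_strongly_convex_on C c \<phi>"
    and lower: "\<And>u. u \<in> C \<Longrightarrow> ereal L \<le> \<phi> u"
    and "z \<in> C" "\<phi> z < \<infinity>"
  shows "\<exists>!u. u \<in> C \<and> (\<forall>v\<in>C. \<phi> u \<le> \<phi> v)"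
proof -
  obtain u where u: "u \<in> C" "\<forall>v\<in>C. \<phi> u \<le> \<phi> v"
    using midpoint_strongly_convex_lsc_has_minimizer[OF assms] by blast
  have "ereal L \<le> \<phi> u" "\<phi> u < \<infinity>"
    using lower u assms(7,8) by (auto intro: le_less_trans)
  then obtain a where "\<phi> u = ereal a"
    by (cases "\<phi> u") auto
  then show ?thesis
    using u midpoint_strongly_convex_minimizer_unique[OF assms(1,4,5) u] by blast
qed

lemma linear_operator_on_diff:
  assumes "linear_operator_on D W" "x \<in> D" "y \<in> D"
  shows "W (x - y) = W x - W y"
proof -
  have "subspace D" "(-1) *\<^sub>R y \<in> D"
    using assms subspace_scale unfolding linear_operator_on_def by blast+
  then have "W (x + (-1) *\<^sub>R y) = W x + (-1) *\<^sub>R W y"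
    using assms unfolding linear_operator_on_def by metis
  then show ?thesis by simp
qed

lemma closed_graph_Int_constraint:
  assumes "closed_operator D W" "bounded_linear A"
  shows "closed {(x, W x) | x. x \<in> D \<and> A x = b}"
proof -
  have eq: "{(x, W x) | x. x \<in> D \<and> A x = b} = {(x, W x) | x. x \<in> D} \<inter> {p. A (fst p) = b}"
    by auto
  have "continuous_on UNIV (\<lambda>p. A (fst p))"
    by (intro bounded_linear.continuous_on[OF assms(2)] continuous_on_fst continuous_on_id)
  then have "closed {p. A (fst p) = b}"
    by (intro closed_Collect_eq continuous_on_const)
  then show ?thesis
    using assms(1) unfolding eq closed_operator_def by (rule closed_Int[rotated])
qed

lemma convex_graph_Int_constraint:
  assumes "linear_operator_on D W" "linear A"
  shows "convex {(x, W x) | x. x \<in> D \<and> A x = b}"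
proof (rule convexI)
  fix p q and u v :: real
  assume "p \<in> {(x, W x) | x. x \<in> D \<and> A x = b}" "q \<in> {(x, W x) | x. x \<in> D \<and> A x = b}"
    and "0 \<le> u" "0 \<le> v" "u + v = 1"
  then obtain x y where xy: "p = (x, W x)" "q = (y, W y)" "x \<in> D" "y \<in> D" "A x = b" "A y = b"
    by blast
  have D: "subspace D" and W: "\<And>x y. x \<in> D \<Longrightarrow> y \<in> D \<Longrightarrow> W (x + y) = W x + W y"
      "\<And>x c. x \<in> D \<Longrightarrow> W (c *\<^sub>R x) = c *\<^sub>R W x"
    using assms(1) unfolding linear_operator_on_def by auto
  have "u *\<^sub>R x + v *\<^sub>R y \<in> D"
    using D xy by (simp add: subspace_add subspace_scale)
  moreover have "W (u *\<^sub>R x + v *\<^sub>R y) = u *\<^sub>R W x + v *\<^sub>R W y"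
    using D W xy by (simp add: subspace_scale)
  moreover have "A (u *\<^sub>R x + v *\<^sub>R y) = b"
    using assms(2) xy \<open>u + v = 1\<close> by (simp add: linear_add linear_scale flip: scaleR_add_left)
  ultimately show "u *\<^sub>R p + v *\<^sub>R q \<in> {(x, W x) | x. x \<in> D \<and> A x = b}"
    using xy by auto
qed

lemma graph_norm_diff_le_of_coercive:
  fixes A :: "'a::real_normed_vector \<Rightarrow> 'c::real_normed_vector" and W :: "'a \<Rightarrow> 'b::real_normed_vector"
  assumes "linear_operator_on D W" "linear A" "c1 > 0"
    and coercive: "\<forall>x\<in>D. (norm (A x))\<^sup>2 + (norm (W x))\<^sup>2 \<ge> c1 * (norm x)\<^sup>2"
    and "x \<in> D" "y \<in> D" "A x = A y"
  shows "c1 * (norm ((x, W x) - (y, W y)))\<^sup>2 \<le> (1 + c1) * (norm (W x - W y))\<^sup>2"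
proof -
  have "x - y \<in> D"
    using assms(1,5,6) unfolding linear_operator_on_def by (simp add: subspace_diff)
  moreover have "A (x - y) = 0"
    using assms(2,7) by (simp add: linear_diff)
  ultimately have "c1 * (norm (x - y))\<^sup>2 \<le> (norm (W x - W y))\<^sup>2"
    using coercive linear_operator_on_diff[OF assms(1,5,6)] by force
  then show ?thesis
    by (simp add: norm_Pair algebra_simps)
qed

lemma midpoint_strongly_convex_on_graph:
  fixes A :: "'a::real_normed_vector \<Rightarrow> 'c::real_normed_vector" and W :: "'a \<Rightarrow> 'b::real_normed_vector"
  assumes "strongly_convex c0 f" "c0 \<ge> 0" "linear_operator_on D W" "linear A" "c1 > 0"
    and "\<forall>x\<in>D. (norm (A x))\<^sup>2 + (norm (W x))\<^sup>2 \<ge> c1 * (norm x)\<^sup>2"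
  shows "midpoint_strongly_convex_on {(x, W x) | x. x \<in> D \<and> A x = b} (c0 * c1 / (1 + c1)) (\<lambda>p. f (snd p))"
  unfolding midpoint_strongly_convex_on_def
proof (intro ballI allI impI)
  fix p q a a'
  assume "p \<in> {(x, W x) | x. x \<in> D \<and> A x = b}" "q \<in> {(x, W x) | x. x \<in> D \<and> A x = b}"
    and fp: "f (snd p) = ereal a" and fq: "f (snd q) = ereal a'"
  then obtain x y where xy: "p = (x, W x)" "q = (y, W y)" "x \<in> D" "y \<in> D" "A x = A y"
    by auto
  have "f (midpoint (W x) (W y)) \<le> ereal ((a + a') / 2 - c0 / 4 * (norm (W x - W y))\<^sup>2)"
    using strongly_convex_imp_midpoint_strongly_convex_on[OF assms(1), of UNIV] fp fq xy
    unfolding midpoint_strongly_convex_on_def by simp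
  also have "\<dots> \<le> ereal ((a + a') / 2 - c0 * c1 / (1 + c1) / 4 * (norm (p - q))\<^sup>2)"
  proof -
    have "c1 * (norm (p - q))\<^sup>2 \<le> (1 + c1) * (norm (W x - W y))\<^sup>2"
      using graph_norm_diff_le_of_coercive[OF assms(3-6) xy(3-5)] xy by simp
    then have "c1 / (1 + c1) * (norm (p - q))\<^sup>2 \<le> (norm (W x - W y))\<^sup>2"
      using \<open>c1 > 0\<close> by (simp add: pos_divide_le_eq mult.commute)
    then have "c0 / 4 * (c1 / (1 + c1) * (norm (p - q))\<^sup>2) \<le> c0 / 4 * (norm (W x - W y))\<^sup>2"
      by (rule mult_left_mono) (use \<open>c0 \<ge> 0\<close> in simp)
    moreover have "c0 * c1 / (1 + c1) / 4 * (norm (p - q))\<^sup>2 = c0 / 4 * (c1 / (1 + c1) * (norm (p - q))\<^sup>2)"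
      by (simp add: algebra_simps)
    ultimately show ?thesis
      unfolding ereal_less_eq(3) by linarith
  qed
  finally show "f (snd (midpoint p q)) \<le> ereal ((a + a') / 2 - c0 * c1 / (1 + c1) / 4 * (norm (p - q))\<^sup>2)"
    using xy by (simp add: midpoint_def)
qed

lemma ex1_minimizer_of_graph_minimizer:
  assumes "\<exists>!p. p \<in> {(x, W x) | x. P x} \<and> (\<forall>q\<in>{(x, W x) | x. P x}. g (snd p) \<le> g (snd q))"
  shows "\<exists>!x. P x \<and> (\<forall>y. P y \<longrightarrow> g (W x) \<le> g (W y))"
proof -
  have graph_min_iff: "(\<forall>q\<in>{(x, W x) | x. P x}. g (snd (x, W x)) \<le> g (snd q))
      \<longleftrightarrow> (\<forall>y. P y \<longrightarrow> g (W x) \<le> g (W y))" for x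
    by auto
  obtain p where p: "p \<in> {(x, W x) | x. P x} \<and> (\<forall>q\<in>{(x, W x) | x. P x}. g (snd p) \<le> g (snd q))"
    and p_unique: "\<forall>p'. p' \<in> {(x, W x) | x. P x} \<and>
      (\<forall>q\<in>{(x, W x) | x. P x}. g (snd p') \<le> g (snd q)) \<longrightarrow> p' = p"
    using assms by (rule ex1E)
  then obtain x where "p = (x, W x)" "P x"
    by blast
  show ?thesis
  proof (rule ex1I)
    show "P x \<and> (\<forall>y. P y \<longrightarrow> g (W x) \<le> g (W y))"
      using p \<open>P x\<close> \<open>p = (x, W x)\<close> graph_min_iff by simp
  next
    fix y assume "P y \<and> (\<forall>z. P z \<longrightarrow> g (W y) \<le> g (W z))"
    then have "(y, W y) = p"
      using p_unique graph_min_iff by blast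
    then show "y = x"
      using \<open>p = (x, W x)\<close> by simp
  qed
qed

lemma constrained_graph_ex1_minimizer:
  fixes A :: "'a::{real_normed_vector,complete_space} \<Rightarrow> 'c::real_normed_vector"
    and W :: "'a \<Rightarrow> 'b::{real_normed_vector,complete_space}"
  assumes "bounded_linear A"
    and "proper_fun f" "lower_semicontinuous f" "c0 > 0" "strongly_convex c0 f"
    and "linear_operator_on D W" "closed_operator D W"
    and "c1 > 0" "\<forall>x\<in>D. (norm (A x))\<^sup>2 + (norm (W x))\<^sup>2 \<ge> c1 * (norm x)\<^sup>2"
    and "x0 \<in> D" "A x0 = b" "f (W x0) < \<infinity>"
  shows "\<exists>!p. p \<in> {(x, W x) | x. x \<in> D \<and> A x = b} \<and>
    (\<forall>q\<in>{(x, W x) | x. x \<in> D \<and> A x = b}. f (snd p) \<le> f (snd q))"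
proof -
  define G where "G = {(x, W x) | x. x \<in> D \<and> A x = b}"
  obtain L where L: "\<forall>y. ereal L \<le> f y"
    using strongly_convex_bdd_below[OF assms(2-5)] by blast
  have "linear A"
    using assms(1) bounded_linear.linear by blast
  have "\<exists>!p. p \<in> G \<and> (\<forall>q\<in>G. f (snd p) \<le> f (snd q))"
  proof (rule midpoint_strongly_convex_lsc_ex1_minimizer
      [where \<phi> = "\<lambda>p. f (snd p)" and c = "c0 * c1 / (1 + c1)" and z = "(x0, W x0)" and L = L])
    show "convex G" "closed G"
      unfolding G_def using convex_graph_Int_constraint[OF assms(6) \<open>linear A\<close>]
        closed_graph_Int_constraint[OF assms(7,1)] by blast+
    show "lower_semicontinuous (\<lambda>p. f (snd p))"
      by (intro lower_semicontinuous_compose[OF assms(3)] continuous_on_snd continuous_on_id)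
    show "midpoint_strongly_convex_on G (c0 * c1 / (1 + c1)) (\<lambda>p. f (snd p))"
      unfolding G_def using assms(4)
      by (intro midpoint_strongly_convex_on_graph assms(5,6,8,9) \<open>linear A\<close>) auto
    show "c0 * c1 / (1 + c1) > 0" "(x0, W x0) \<in> G" "f (snd (x0, W x0)) < \<infinity>"
      using assms(4,8,10-12) unfolding G_def by auto
    show "\<And>p. p \<in> G \<Longrightarrow> ereal L \<le> f (snd p)"
      using L by blast
  qed
  then show ?thesis
    unfolding G_def .
qed

theorem theorem2p1:
  fixes A :: "'x::{real_inner,complete_space} \<Rightarrow> 'h::{real_inner,complete_space}"
    and f :: "'y::{real_inner,complete_space} \<Rightarrow> ereal"
    and W :: "'x \<Rightarrow> 'y"
    and D :: "'x set"
    and c0 c1 :: real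
    and b :: 'h
  assumes A1: "bounded_linear A"
    and A2: "proper_fun f" "lower_semicontinuous f" "c0 > 0" "strongly_convex c0 f"
    and A3: "linear_operator_on D W" "densely_defined D" "closed_operator D W"
    and A4: "c1 > 0" "\<forall>x\<in>D. (norm (A x))\<^sup>2 + (norm (W x))\<^sup>2 \<ge> c1 * (norm x)\<^sup>2"
    and consistent: "\<exists>x\<in>D. A x = b \<and> W x \<in> effective_domain f"
  shows "(\<exists>!xs. xs \<in> D \<and> A xs = b \<and> (\<forall>x\<in>D. A x = b \<longrightarrow> f (W xs) \<le> f (W x))) \<and>
         (\<forall>xs. xs \<in> D \<and> A xs = b \<and> (\<forall>x\<in>D. A x = b \<longrightarrow> f (W xs) \<le> f (W x))
            \<longrightarrow> W xs \<in> effective_domain f)"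
proof -
  obtain x0 where x0: "x0 \<in> D" "A x0 = b" "f (W x0) < \<infinity>"
    using consistent unfolding effective_domain_def by auto
  have "\<exists>!xs. (xs \<in> D \<and> A xs = b) \<and> (\<forall>x. x \<in> D \<and> A x = b \<longrightarrow> f (W xs) \<le> f (W x))"
    using constrained_graph_ex1_minimizer[OF A1 A2 A3(1,3) A4 x0]
    by (rule ex1_minimizer_of_graph_minimizer)
  then have "\<exists>!xs. xs \<in> D \<and> A xs = b \<and> (\<forall>x\<in>D. A x = b \<longrightarrow> f (W xs) \<le> f (W x))"
    by (simp only: Ball_def conj_assoc imp_conjL)
  moreover have "W xs \<in> effective_domain f" if "\<forall>x\<in>D. A x = b \<longrightarrow> f (W xs) \<le> f (W x)" for xs
    using that x0 le_less_trans unfolding effective_domain_def by blast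
  ultimately show ?thesis
    by simp
qed

end
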